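(* For any integers $m,n\geq 3$, we have $M_{\mathcal{F}_{c}}(G_{m,n})\leq 16$. Moreover, $M_{\mathcal{F}_{c}}(G_{3,3})=16$.
   Context: For integers $m,n\geq 3$, the $m\times n$ grid $G_{m,n}$ is the graph with vertex set $[m]\times[n]$ in which $(u,v)$ and $(i,j)$ are adjacent if and only if either $u=i$ and $v\equiv j\pm 1 \pmod n$, or $v=j$ and $u\equiv i\pm1 \pmod m$. For two graphs on the same vertex set, their symmetric difference is the graph on that vertex set whose edges are those belonging to exactly one of the two graphs. $M_{\mathcal{F}_{c}}(G_{m,n})$ denotes the maximum possible size of a family $\mathcal{G}$ of spanning subgraphs of $G_{m,n}$ such that the symmetric difference of any two distinct members of $\mathcal{G}$ is connected. *)

theory Defs
  imports Main
begin

definition grid_vertices :: "nat \<Rightarrow> nat \<Rightarrow> (nat \<times> nat) set" where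
  "grid_vertices m n = {1..m} \<times> {1..n}"

definition grid_adj :: "nat \<Rightarrow> nat \<Rightarrow> nat \<times> nat \<Rightarrow> nat \<times> nat \<Rightarrow> bool" where
  "grid_adj m n a b \<longleftrightarrow>
     (fst a = fst b \<and> ((snd a mod n = (snd b + 1) mod n) \<or> ((snd a + 1) mod n = snd b mod n))) \<or>
     (snd a = snd b \<and> ((fst a mod m = (fst b + 1) mod m) \<or> ((fst a + 1) mod m = fst b mod m)))"

definition grid_edges :: "nat \<Rightarrow> nat \<Rightarrow> (nat \<times> nat) set set" where
  "grid_edges m n = {{a, b} | a b. a \<in> grid_vertices m n \<and> b \<in> grid_vertices m n \<and> grid_adj m n a b}"

definition graph_connected :: "'v set \<Rightarrow> 'v set set \<Rightarrow> bool" where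
  "graph_connected V E \<longleftrightarrow>
     (\<forall>x\<in>V. \<forall>y\<in>V. (x, y) \<in> {(a, b). {a, b} \<in> E}\<^sup>*)"

text \<open>A spanning subgraph of G_{m,n} is determined by its edge set, a subset of grid_edges.
  A family is admissible if the symmetric difference of any two distinct members is connected.\<close>
definition conn_family :: "nat \<Rightarrow> nat \<Rightarrow> (nat \<times> nat) set set set \<Rightarrow> bool" where
  "conn_family m n \<G> \<longleftrightarrow>
     (\<forall>H\<in>\<G>. H \<subseteq> grid_edges m n) \<and>
     (\<forall>H1\<in>\<G>. \<forall>H2\<in>\<G>. H1 \<noteq> H2 \<longrightarrow>
        graph_connected (grid_vertices m n) ((H1 - H2) \<union> (H2 - H1)))"

definition M_Fc_grid :: "nat \<Rightarrow> nat \<Rightarrow> nat" where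
  "M_Fc_grid m n = Max {card \<G> | \<G>. conn_family m n \<G>}"

end

theory Submission
  imports Defs
begin

text \<open>
  Upper bound: if two distinct members of the family agreed on the edges at a vertex v, their
  symmetric difference would leave v isolated and hence be disconnected. So a member is determined
  by which of the edges at v it contains, and every vertex of G_{m,n} has degree at most 4.

  Lower bound: four spanning subgraphs of G_{3,3} are chosen so that each of the 15 nonzero
  GF(2)-combinations of them is connected. Their GF(2)-span then has 16 members, and the
  symmetric difference of two distinct members is a nonzero combination.
\<close>

lemma graph_connected_edge_at:
  assumes "graph_connected V E" "v \<in> V" "w \<in> V" "v \<noteq> w"
  shows "\<exists>u. {v, u} \<in> E"
proof -
  have "(v, w) \<in> {(a, b). {a, b} \<in> E}\<^sup>*"
    using assms unfolding graph_connected_def by blast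
  then show ?thesis
    using \<open>v \<noteq> w\<close> by (cases rule: converse_rtranclE) auto
qed

definition edges_at :: "'v \<Rightarrow> 'v set set \<Rightarrow> 'v set set" where
  "edges_at v E = {e \<in> E. v \<in> e}"

lemma card_le_pow_card_edges_at:
  fixes \<G> :: "'v set set set"
  assumes subgraphs: "\<forall>H\<in>\<G>. H \<subseteq> E"
    and connected: "\<forall>H1\<in>\<G>. \<forall>H2\<in>\<G>. H1 \<noteq> H2 \<longrightarrow>
                      graph_connected V (sym_diff H1 H2)"
    and vertices: "v \<in> V" "w \<in> V" "v \<noteq> w"
    and finite_degree: "finite (edges_at v E)"
  shows "card \<G> \<le> 2 ^ card (edges_at v E)"
proof -
  let ?trace = "\<lambda>H. H \<inter> edges_at v E"
  have "inj_on ?trace \<G>"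
  proof (rule inj_onI, rule ccontr)
    fix H1 H2
    assume H: "H1 \<in> \<G>" "H2 \<in> \<G>" "?trace H1 = ?trace H2" "H1 \<noteq> H2"
    then obtain u where "{v, u} \<in> sym_diff H1 H2"
      using connected vertices graph_connected_edge_at by metis
    then show False
      using H subgraphs unfolding edges_at_def by blast
  qed
  moreover have "?trace ` \<G> \<subseteq> Pow (edges_at v E)"
    by blast
  ultimately have "card \<G> \<le> card (Pow (edges_at v E))"
    using finite_degree by (intro card_inj_on_le) auto
  then show ?thesis
    using finite_degree by (simp add: card_Pow)
qed

lemma torus_neighbour_of_1:
  fixes j n :: nat
  assumes "1 \<le> j" "j \<le> n" "3 \<le> n" "1 mod n = (j + 1) mod n \<or> 2 mod n = j mod n"
  shows "j = 2 \<or> j = n"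
proof -
  consider "j = n" | "j + 1 = n" | "j + 1 < n"
    using assms(2) by linarith
  then show ?thesis
    using assms by cases auto
qed

lemma grid_adj_1_1:
  assumes "m \<ge> 3" "n \<ge> 3" "b \<in> grid_vertices m n" "grid_adj m n (1, 1) b"
  shows "b \<in> {(1, 2), (1, n), (2, 1), (m, 1)}"
proof -
  obtain i j where b: "b = (i, j)"
    by (cases b)
  have bounds: "1 \<le> i" "i \<le> m" "1 \<le> j" "j \<le> n"
    using assms(3) by (auto simp: b grid_vertices_def)
  have "(1 = i \<and> (1 mod n = (j + 1) mod n \<or> 2 mod n = j mod n)) \<or>
        (1 = j \<and> (1 mod m = (i + 1) mod m \<or> 2 mod m = i mod m))"
    using assms(4) unfolding b grid_adj_def by (simp only: fst_conv snd_conv one_add_one)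
  then show ?thesis
    using torus_neighbour_of_1[of j n] torus_neighbour_of_1[of i m] assms(1,2) bounds b
    by auto
qed

lemma edges_at_1_1_grid:
  assumes "m \<ge> 3" "n \<ge> 3"
  shows "edges_at (1, 1) (grid_edges m n) \<subseteq>
           {{(1, 1), (1, 2)}, {(1, 1), (1, n)}, {(1, 1), (2, 1)}, {(1, 1), (m, 1)}}"
proof
  fix e
  assume "e \<in> edges_at (1, 1) (grid_edges m n)"
  then obtain a b where e: "e = {a, b}" "(1, 1) \<in> e"
    and ab: "a \<in> grid_vertices m n" "b \<in> grid_vertices m n" "grid_adj m n a b"
    unfolding edges_at_def grid_edges_def by blast
  have "grid_adj m n b a"
    using ab(3) by (auto simp: grid_adj_def)
  then consider "a = (1, 1)" "b \<in> {(1, 2), (1, n), (2, 1), (m, 1)}"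
    | "b = (1, 1)" "a \<in> {(1, 2), (1, n), (2, 1), (m, 1)}"
    using e(2) ab grid_adj_1_1[OF assms] unfolding e(1) by blast
  then show "e \<in> {{(1, 1), (1, 2)}, {(1, 1), (1, n)}, {(1, 1), (2, 1)}, {(1, 1), (m, 1)}}"
    unfolding e(1) by cases (auto simp: insert_commute)
qed

lemma conn_family_card_le_16:
  assumes "m \<ge> 3" "n \<ge> 3" "conn_family m n \<G>"
  shows "card \<G> \<le> 16"
proof -
  let ?S = "edges_at (1, 1) (grid_edges m n)"
  let ?N = "{{(1, 1), (1, 2)}, {(1, 1), (1, n)}, {(1, 1), (2, 1)}, {(1, 1), (m, 1)}}"
  have "?S \<subseteq> ?N"
    using assms(1,2) by (rule edges_at_1_1_grid)
  moreover have "card ?N \<le> 4"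
    by (simp add: card_insert_if)
  ultimately have finite: "finite ?S" and degree: "card ?S \<le> 4"
    by (auto dest: finite_subset card_mono[rotated])
  have "(1, 1) \<in> grid_vertices m n" "(1, 2) \<in> grid_vertices m n"
    using assms(1,2) by (auto simp: grid_vertices_def)
  with assms(3) finite have "card \<G> \<le> 2 ^ card ?S"
    unfolding conn_family_def by (intro card_le_pow_card_edges_at[where w = "(1, 2)"]) auto
  also have "\<dots> \<le> 2 ^ 4"
    using degree by (rule power_increasing) simp
  finally show ?thesis
    by simp
qed

lemma M_Fc_grid_le:
  assumes "\<And>\<G>. conn_family m n \<G> \<Longrightarrow> card \<G> \<le> k"
  shows "M_Fc_grid m n \<le> k"
proof -
  have "conn_family m n {}"
    by (simp add: conn_family_def)
  moreover have "{card \<G> | \<G>. conn_family m n \<G>} \<subseteq> {..k}"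
    using assms by auto
  ultimately show ?thesis
    unfolding M_Fc_grid_def by (subst Max_le_iff) (auto dest: finite_subset)
qed

(* The bound k is needed because Max of an infinite set is unspecified. *)
lemma card_le_M_Fc_grid:
  assumes "\<And>\<G>. conn_family m n \<G> \<Longrightarrow> card \<G> \<le> k" "conn_family m n \<G>"
  shows "card \<G> \<le> M_Fc_grid m n"
proof -
  have "{card \<G> | \<G>. conn_family m n \<G>} \<subseteq> {..k}"
    using assms(1) by auto
  then show ?thesis
    unfolding M_Fc_grid_def using assms(2) by (intro Max_ge) (auto dest: finite_subset)
qed

lemma rtrancl_if_successively:
  assumes "successively (\<lambda>a b. {a, b} \<in> E) (x # xs)" "y \<in> set (x # xs)"
  shows "(x, y) \<in> {(a, b). {a, b} \<in> E}\<^sup>*"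
  using assms
proof (induction xs arbitrary: x)
  case Nil
  then show ?case by simp
next
  case (Cons z zs)
  then show ?case
    by (cases "y = x") (auto intro: converse_rtrancl_into_rtrancl)
qed

lemma graph_connected_if_walk:
  assumes walk: "successively (\<lambda>a b. {a, b} \<in> E) L" and covers: "V \<subseteq> set L"
  shows "graph_connected V E"
  unfolding graph_connected_def
proof (intro ballI)
  fix x y
  assume "x \<in> V" "y \<in> V"
  let ?R = "{(a, b). {a, b} \<in> E}"
  obtain h t where L: "L = h # t"
    using covers \<open>x \<in> V\<close> by (cases L) auto
  have "(h, x) \<in> ?R\<^sup>*" "(h, y) \<in> ?R\<^sup>*"
    using rtrancl_if_successively[of E h t] walk covers \<open>x \<in> V\<close> \<open>y \<in> V\<close>
    unfolding L by auto
  moreover have "?R\<inverse> = ?R"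
    by (auto simp: insert_commute)
  ultimately have "(x, h) \<in> ?R\<^sup>*"
    using rtrancl_converseI[of h x ?R] by simp
  then show "(x, y) \<in> ?R\<^sup>*"
    using \<open>(h, y) \<in> ?R\<^sup>*\<close> by (rule rtrancl_trans)
qed

lemma grid_vertices_3_3:
  "grid_vertices 3 3 = {(1,1), (1,2), (1,3), (2,1), (2,2), (2,3), (3,1), (3,2), (3,3)}"
proof -
  have "{1..3::nat} = {1, 2, 3}"
    by auto
  then show ?thesis
    unfolding grid_vertices_def by (simp add: insert_Times_insert insert_commute)
qed

definition grid33_gen1 :: "(nat \<times> nat) set set" where
  "grid33_gen1 = {{(1,1),(2,1)}, {(1,2),(1,3)}, {(1,2),(2,2)}, {(2,1),(2,2)}, {(2,1),(2,3)},
                 {(2,3),(3,3)}, {(3,1),(3,3)}, {(3,2),(3,3)}}"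

definition grid33_gen2 :: "(nat \<times> nat) set set" where
  "grid33_gen2 = {{(1,1),(1,3)}, {(1,2),(2,2)}, {(1,2),(3,2)}, {(1,3),(2,3)}, {(1,3),(3,3)},
                 {(2,1),(2,3)}, {(2,1),(3,1)}, {(3,1),(3,3)}, {(3,2),(3,3)}}"

definition grid33_gen3 :: "(nat \<times> nat) set set" where
  "grid33_gen3 = {{(1,1),(1,2)}, {(1,1),(1,3)}, {(1,2),(3,2)}, {(1,3),(2,3)}, {(2,1),(2,2)},
                 {(2,1),(2,3)}, {(2,2),(3,2)}, {(2,3),(3,3)}, {(3,1),(3,2)}}"

definition grid33_gen4 :: "(nat \<times> nat) set set" where
  "grid33_gen4 = {{(1,1),(1,2)}, {(1,1),(1,3)}, {(1,1),(3,1)}, {(1,2),(1,3)}, {(1,2),(3,2)},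
                 {(1,3),(3,3)}, {(2,1),(2,2)}, {(2,1),(2,3)}, {(2,1),(3,1)}, {(2,2),(2,3)},
                 {(2,2),(3,2)}, {(2,3),(3,3)}, {(3,1),(3,3)}}"

type_synonym coeffs = "bool \<times> bool \<times> bool \<times> bool"

(* The GF(2)-combination a gen1 + b gen2 + c gen3 + d gen4; on bool, \<noteq> is addition mod 2. *)
fun grid33_span :: "coeffs \<Rightarrow> (nat \<times> nat) set set" where
  "grid33_span (a, b, c, d) =
     {e. (a \<and> e \<in> grid33_gen1) \<noteq> ((b \<and> e \<in> grid33_gen2) \<noteq>
           ((c \<and> e \<in> grid33_gen3) \<noteq> (d \<and> e \<in> grid33_gen4)))}"

fun coeffs_add :: "coeffs \<Rightarrow> coeffs \<Rightarrow> coeffs" where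
  "coeffs_add (a, b, c, d) (a', b', c', d') = (a \<noteq> a', b \<noteq> b', c \<noteq> c', d \<noteq> d')"

fun grid33_walk :: "coeffs \<Rightarrow> (nat \<times> nat) list" where
  "grid33_walk (True, False, False, False) = [(1,1), (2,1), (2,2), (1,2), (1,3), (1,2), (2,2), (2,1), (2,3), (3,3), (3,1), (3,3), (3,2)]"
| "grid33_walk (False, True, False, False) = [(1,1), (1,3), (2,3), (2,1), (3,1), (3,3), (3,2), (1,2), (2,2)]"
| "grid33_walk (True, True, False, False) = [(1,1), (1,3), (1,2), (3,2), (1,2), (1,3), (2,3), (3,3), (2,3), (1,3), (1,1), (2,1), (2,2), (2,1), (3,1)]"
| "grid33_walk (False, False, True, False) = [(1,1), (1,2), (3,2), (2,2), (2,1), (2,3), (1,3), (2,3), (3,3), (2,3), (2,1), (2,2), (3,2), (3,1)]"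
| "grid33_walk (True, False, True, False) = [(1,1), (1,2), (1,3), (2,3), (1,3), (1,2), (2,2), (3,2), (3,1), (3,3), (3,1), (3,2), (2,2), (1,2), (1,1), (2,1)]"
| "grid33_walk (False, True, True, False) = [(1,1), (1,2), (2,2), (2,1), (3,1), (3,2), (3,3), (1,3), (3,3), (2,3)]"
| "grid33_walk (True, True, True, False) = [(1,1), (1,2), (1,3), (3,3), (1,3), (1,2), (1,1), (2,1), (2,3), (2,1), (3,1), (3,2), (2,2)]"
| "grid33_walk (False, False, False, True) = [(1,1), (1,2), (1,3), (3,3), (2,3), (2,1), (2,2), (3,2), (2,2), (2,1), (3,1)]"
| "grid33_walk (True, False, False, True) = [(1,1), (1,2), (2,2), (2,3), (2,2), (3,2), (3,3), (1,3), (3,3), (3,2), (2,2), (1,2), (1,1), (2,1), (3,1)]"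
| "grid33_walk (False, True, False, True) = [(1,1), (1,2), (1,3), (2,3), (2,2), (2,1), (2,2), (3,2), (3,3), (3,2), (2,2), (2,3), (1,3), (1,2), (1,1), (3,1)]"
| "grid33_walk (True, True, False, True) = [(1,1), (1,2), (1,1), (2,1), (2,3), (1,3), (2,3), (2,2), (3,2), (2,2), (2,3), (2,1), (1,1), (3,1), (3,3)]"
| "grid33_walk (False, False, True, True) = [(1,1), (3,1), (2,1), (3,1), (3,2), (3,1), (3,3), (1,3), (1,2), (1,3), (2,3), (2,2)]"
| "grid33_walk (True, False, True, True) = [(1,1), (2,1), (2,2), (1,2), (2,2), (2,3), (1,3), (3,3), (3,2), (3,1)]"
| "grid33_walk (False, True, True, True) = [(1,1), (1,3), (1,2), (2,2), (2,3), (2,1), (2,3), (2,2), (1,2), (3,2), (3,1), (3,2), (3,3)]"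
| "grid33_walk (True, True, True, True) = [(1,1), (1,3), (1,1), (2,1), (2,2), (2,3), (3,3), (3,1), (3,2), (1,2)]"
| "grid33_walk (False, False, False, False) = []"

lemma grid33_walk_spanning:
  assumes "r \<noteq> (False, False, False, False)"
  shows "successively (\<lambda>a b. {a, b} \<in> grid33_span r) (grid33_walk r) \<and>
         grid_vertices 3 3 \<subseteq> set (grid33_walk r)"
proof -
  obtain a b c d where "r = (a, b, c, d)"
    by (cases r)
  with assms show ?thesis
    by (cases a; cases b; cases c; cases d)
      (simp_all add: grid33_gen1_def grid33_gen2_def grid33_gen3_def grid33_gen4_def
        doubleton_eq_iff grid_vertices_3_3)
qed

lemma grid33_span_connected:
  assumes "r \<noteq> (False, False, False, False)"
  shows "graph_connected (grid_vertices 3 3) (grid33_span r)"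
  using grid33_walk_spanning[OF assms] graph_connected_if_walk by blast

lemma grid33_span_sym_diff:
  "sym_diff (grid33_span p) (grid33_span q) = grid33_span (coeffs_add p q)"
  by (cases p; cases q) auto

lemma coeffs_add_eq_zero_iff:
  "coeffs_add p q = (False, False, False, False) \<longleftrightarrow> p = q"
  by (cases p; cases q) auto

lemma grid33_span_subset_grid_edges: "grid33_span r \<subseteq> grid_edges 3 3"
proof -
  have edge: "{a, b} \<in> grid_edges 3 3"
    if "a \<in> grid_vertices 3 3" "b \<in> grid_vertices 3 3" "grid_adj 3 3 a b" for a b
    using that unfolding grid_edges_def by blast
  have "grid33_gen1 \<union> grid33_gen2 \<union> grid33_gen3 \<union> grid33_gen4 \<subseteq> grid_edges 3 3"
    unfolding grid33_gen1_def grid33_gen2_def grid33_gen3_def grid33_gen4_def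
    by (intro Un_least insert_subsetI empty_subsetI; rule edge)
      (simp_all add: grid_vertices_3_3 grid_adj_def)
  moreover have "grid33_span r \<subseteq> grid33_gen1 \<union> grid33_gen2 \<union> grid33_gen3 \<union> grid33_gen4"
    by (cases r) auto
  ultimately show ?thesis
    by blast
qed

lemma inj_grid33_span: "inj grid33_span"
proof (rule injI, rule ccontr)
  fix p q
  assume "grid33_span p = grid33_span q" "p \<noteq> q"
  then have "graph_connected (grid_vertices 3 3) {}"
    using grid33_span_connected[of "coeffs_add p q"] grid33_span_sym_diff[of p q]
      coeffs_add_eq_zero_iff by simp
  then show False
    using graph_connected_edge_at[of "grid_vertices 3 3" "{}" "(1, 1)" "(1, 2)"]
    by (simp add: grid_vertices_3_3)
qed

lemma conn_family_grid33_span: "conn_family 3 3 (range grid33_span)"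
  unfolding conn_family_def
proof (intro conjI ballI impI)
  show "H \<subseteq> grid_edges 3 3" if "H \<in> range grid33_span" for H
    using that grid33_span_subset_grid_edges by blast
next
  fix H1 H2
  assume "H1 \<in> range grid33_span" "H2 \<in> range grid33_span" "H1 \<noteq> H2"
  then obtain p q where "H1 = grid33_span p" "H2 = grid33_span q" "p \<noteq> q"
    by blast
  then show "graph_connected (grid_vertices 3 3) (sym_diff H1 H2)"
    using grid33_span_connected[of "coeffs_add p q"] coeffs_add_eq_zero_iff[of p q]
    by (simp only: grid33_span_sym_diff) blast
qed

lemma card_range_grid33_span: "card (range grid33_span) = 16"
proof -
  have "card (UNIV :: coeffs set) = 16"
    by (simp add: UNIV_Times_UNIV[symmetric] card_cartesian_product del: UNIV_Times_UNIV)
  then show ?thesis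
    using card_image[OF inj_grid33_span] by simp
qed

theorem proposition1p7:
  shows "(\<forall>m n. m \<ge> 3 \<longrightarrow> n \<ge> 3 \<longrightarrow> M_Fc_grid m n \<le> 16) \<and> M_Fc_grid 3 3 = 16"
proof (intro conjI allI impI)
  fix m n :: nat
  assume "m \<ge> 3" "n \<ge> 3"
  then show "M_Fc_grid m n \<le> 16"
    using conn_family_card_le_16 by (intro M_Fc_grid_le) blast
next
  have "card (range grid33_span) \<le> M_Fc_grid 3 3"
    using conn_family_card_le_16[of 3 3] conn_family_grid33_span
    by (intro card_le_M_Fc_grid) auto
  moreover have "M_Fc_grid 3 3 \<le> 16"
    using conn_family_card_le_16[of 3 3] by (intro M_Fc_grid_le) auto
  ultimately show "M_Fc_grid 3 3 = 16"
    using card_range_grid33_span by simp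
qed

end
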